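(* The product in $\mathbf{Sys}(L)$ of a set-indexed family of sober affine systems is sober.
   Context: Fix a variety $\mathbf{A}$ of algebras (full subcategory of the category of $\Omega$-algebras and homomorphisms closed under products, subalgebras and homomorphic images) having set-indexed coproducts $(A_i\xrightarrow{\mu_i}\coprod_iA_i)_i$. Fix an $\mathbf{A}$-algebra $L$; $L^X$ is the power algebra. An affine system is $(X,\kappa,A)$ with $X$ a set, $A$ an algebra, $\kappa:A\to L^X$ a homomorphism; a morphism $(f,\varphi):(X_1,\kappa_1,A_1)\to(X_2,\kappa_2,A_2)$ is a map $f:X_1\to X_2$ with a homomorphism $\varphi:A_2\to A_1$ such that $\kappa_1(\varphi(a))(x)=\kappa_2(a)(f(x))$; this is $\mathbf{Sys}(L)$. For an algebra $A$, $Pt_L(A)$ is the set of homomorphisms $A\to L$; for a system $(X,\kappa,A)$, $\ell:X\to Pt_L(A)$ is $\ell(x)(a)=\kappa(a)(x)$, and the system is sober if $\ell$ is bijective. The product of $(X_i,\kappa_i,A_i)_{i\in I}$ is $(\prod_iX_i,\kappa,\coprod_iA_i)$ with projections $(\pi_i,\mu_i)$, where $\kappa$ is the unique homomorphism with $\kappa(\mu_i(a))(x)=\kappa_i(a)(x_i)$. *)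

theory Defs
  imports "HOL-Library.FuncSet"
begin

text \<open>A signature is given by an arity map ar :: 'o => 'n set: the operation symbol w
takes a family of arguments indexed by ar w. Argument families are represented as
extensional functions (undefined outside ar w).\<close>

record ('a, 'o, 'n) alg =
  carrier :: "'a set"
  ops :: "'o \<Rightarrow> ('n \<Rightarrow> 'a) \<Rightarrow> 'a"

definition algebra :: "('o \<Rightarrow> 'n set) \<Rightarrow> ('a, 'o, 'n) alg \<Rightarrow> bool" where
  "algebra ar A \<longleftrightarrow>
     (\<forall>w f. f \<in> ar w \<rightarrow>\<^sub>E carrier A \<longrightarrow> ops A w f \<in> carrier A)"

definition hom :: "('o \<Rightarrow> 'n set) \<Rightarrow> ('a, 'o, 'n) alg \<Rightarrow> ('b, 'o, 'n) alg \<Rightarrow> ('a \<Rightarrow> 'b) \<Rightarrow> bool" where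
  "hom ar A B h \<longleftrightarrow>
     h \<in> carrier A \<rightarrow> carrier B \<and>
     (\<forall>w f. f \<in> ar w \<rightarrow>\<^sub>E carrier A \<longrightarrow>
        h (ops A w f) = ops B w (\<lambda>j\<in>ar w. h (f j)))"

definition power :: "('o \<Rightarrow> 'n set) \<Rightarrow> ('l, 'o, 'n) alg \<Rightarrow> 'x set \<Rightarrow> ('x \<Rightarrow> 'l, 'o, 'n) alg" where
  "power ar L X =
     \<lparr> carrier = X \<rightarrow>\<^sub>E carrier L,
       ops = (\<lambda>w F. \<lambda>x\<in>X. ops L w (\<lambda>j\<in>ar w. F j x)) \<rparr>"

datatype ('v, 'o, 'n) trm = Var 'v | Op 'o "'n \<Rightarrow> ('v, 'o, 'n) trm"

primrec eval :: "('o \<Rightarrow> 'n set) \<Rightarrow> ('a, 'o, 'n) alg \<Rightarrow> ('v \<Rightarrow> 'a) \<Rightarrow> ('v, 'o, 'n) trm \<Rightarrow> 'a" where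
  "eval ar A \<sigma> (Var v) = \<sigma> v"
| "eval ar A \<sigma> (Op w ts) = ops A w (\<lambda>j\<in>ar w. eval ar A \<sigma> (ts j))"

definition in_variety ::
  "('o \<Rightarrow> 'n set) \<Rightarrow> (('v, 'o, 'n) trm \<times> ('v, 'o, 'n) trm) set \<Rightarrow> ('a, 'o, 'n) alg \<Rightarrow> bool" where
  "in_variety ar E A \<longleftrightarrow> algebra ar A \<and>
     (\<forall>(s, t)\<in>E. \<forall>\<sigma>. \<sigma> \<in> UNIV \<rightarrow> carrier A \<longrightarrow> eval ar A \<sigma> s = eval ar A \<sigma> t)"

text \<open>C with injections mu is a coproduct of the family (A i)_{i in I} in the variety,
where the universal property is required against all algebras of the variety whose
carrier lives in the type 'b (a HOL type-level restriction; a genuine coproduct in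
the variety satisfies this for every type 'b).\<close>
definition is_coproduct ::
  "'b itself \<Rightarrow> ('o \<Rightarrow> 'n set) \<Rightarrow> (('v, 'o, 'n) trm \<times> ('v, 'o, 'n) trm) set \<Rightarrow>
   'i set \<Rightarrow> ('i \<Rightarrow> ('a, 'o, 'n) alg) \<Rightarrow> ('c, 'o, 'n) alg \<Rightarrow> ('i \<Rightarrow> 'a \<Rightarrow> 'c) \<Rightarrow> bool" where
  "is_coproduct (_ :: 'b itself) ar E I A C \<mu> \<longleftrightarrow>
     in_variety ar E C \<and> (\<forall>i\<in>I. hom ar (A i) C (\<mu> i)) \<and>
     (\<forall>(B :: ('b, 'o, 'n) alg) f. in_variety ar E B \<and> (\<forall>i\<in>I. hom ar (A i) B (f i)) \<longrightarrow>
        (\<exists>!g. g \<in> extensional (carrier C) \<and> hom ar C B g \<and>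
              (\<forall>i\<in>I. \<forall>a\<in>carrier (A i). g (\<mu> i a) = f i a)))"

definition affine_system ::
  "('o \<Rightarrow> 'n set) \<Rightarrow> ('l, 'o, 'n) alg \<Rightarrow> 'x set \<Rightarrow> ('a \<Rightarrow> 'x \<Rightarrow> 'l) \<Rightarrow> ('a, 'o, 'n) alg \<Rightarrow> bool" where
  "affine_system ar L X \<kappa> A \<longleftrightarrow> algebra ar A \<and> hom ar A (power ar L X) \<kappa>"

definition Pt :: "('o \<Rightarrow> 'n set) \<Rightarrow> ('l, 'o, 'n) alg \<Rightarrow> ('a, 'o, 'n) alg \<Rightarrow> ('a \<Rightarrow> 'l) set" where
  "Pt ar L A = {h. h \<in> extensional (carrier A) \<and> hom ar A L h}"

definition ell :: "('a, 'o, 'n) alg \<Rightarrow> ('a \<Rightarrow> 'x \<Rightarrow> 'l) \<Rightarrow> 'x \<Rightarrow> ('a \<Rightarrow> 'l)" where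
  "ell A \<kappa> x = (\<lambda>a\<in>carrier A. \<kappa> a x)"

definition sober ::
  "('o \<Rightarrow> 'n set) \<Rightarrow> ('l, 'o, 'n) alg \<Rightarrow> 'x set \<Rightarrow> ('a \<Rightarrow> 'x \<Rightarrow> 'l) \<Rightarrow> ('a, 'o, 'n) alg \<Rightarrow> bool" where
  "sober ar L X \<kappa> A \<longleftrightarrow> bij_betw (ell A \<kappa>) X (Pt ar L A)"

definition is_product_map ::
  "('o \<Rightarrow> 'n set) \<Rightarrow> ('l, 'o, 'n) alg \<Rightarrow> 'i set \<Rightarrow> ('i \<Rightarrow> 'x set) \<Rightarrow> ('i \<Rightarrow> 'a \<Rightarrow> 'x \<Rightarrow> 'l) \<Rightarrow>
   ('i \<Rightarrow> ('a, 'o, 'n) alg) \<Rightarrow> ('c, 'o, 'n) alg \<Rightarrow> ('i \<Rightarrow> 'a \<Rightarrow> 'c) \<Rightarrow> ('c \<Rightarrow> ('i \<Rightarrow> 'x) \<Rightarrow> 'l) \<Rightarrow> bool" where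
  "is_product_map ar L I X \<kappa> A C \<mu> K \<longleftrightarrow>
     hom ar C (power ar L (Pi\<^sub>E I X)) K \<and>
     (\<forall>i\<in>I. \<forall>a\<in>carrier (A i). \<forall>x\<in>Pi\<^sub>E I X. K (\<mu> i a) x = \<kappa> i a (x i))"

end

theory Submission
  imports Defs
begin

text \<open>Pulling the point of the product at x back along the coproduct injection \<mu> i gives
the point of the i-th factor at x i. Hence ell is injective on the product because it is so on
each factor; and it is surjective because a point h of the coproduct is determined by its
pullbacks h \<circ> \<mu> i, each of which comes from some x i by sobriety of the factors.\<close>

lemma hom_comp:
  assumes "hom ar A B f" "hom ar B C g"
  shows "hom ar A C (\<lambda>a. g (f a))"
proof -
  have "\<And>w h. h \<in> ar w \<rightarrow>\<^sub>E carrier A \<Longrightarrow> (\<lambda>j\<in>ar w. f (h j)) \<in> ar w \<rightarrow>\<^sub>E carrier B"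
    using assms(1) unfolding hom_def by auto
  then show ?thesis using assms unfolding hom_def
    by (auto simp: Pi_iff cong: restrict_cong)
qed

lemma hom_restrict:
  assumes "hom ar A B f" "algebra ar A"
  shows "hom ar A B (\<lambda>a\<in>carrier A. f a)"
proof -
  have "\<And>w h. h \<in> ar w \<rightarrow>\<^sub>E carrier A \<Longrightarrow>
      (\<lambda>j\<in>ar w. (\<lambda>a\<in>carrier A. f a) (h j)) = (\<lambda>j\<in>ar w. f (h j))"
    by (auto intro!: restrict_ext)
  then show ?thesis using assms unfolding hom_def algebra_def by auto
qed

lemma hom_eval:
  assumes "hom ar C (power ar L Y) K" "x \<in> Y"
  shows "hom ar C L (\<lambda>c. K c x)"
proof -
  have "\<And>w h. h \<in> ar w \<rightarrow>\<^sub>E carrier C \<Longrightarrow>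
      (\<lambda>j\<in>ar w. (\<lambda>j\<in>ar w. K (h j)) j x) = (\<lambda>j\<in>ar w. K (h j) x)"
    by (auto intro!: restrict_ext)
  then show ?thesis using assms unfolding hom_def power_def
    by (auto simp: PiE_iff Pi_iff)
qed

lemma ell_in_Pt:
  assumes "affine_system ar L X \<kappa> A" "x \<in> X"
  shows "ell A \<kappa> x \<in> Pt ar L A"
proof -
  have hom: "hom ar A (power ar L X) \<kappa>" and alg: "algebra ar A"
    using assms(1) unfolding affine_system_def by auto
  have "hom ar A L (\<lambda>a\<in>carrier A. \<kappa> a x)"
    by (rule hom_restrict[OF hom_eval[OF hom assms(2)] alg])
  then show ?thesis unfolding Pt_def ell_def by simp
qed

lemma Pt_pullback:
  assumes "h \<in> Pt ar L C" "hom ar A C \<mu>" "algebra ar A"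
  shows "(\<lambda>a\<in>carrier A. h (\<mu> a)) \<in> Pt ar L A"
proof -
  have "hom ar C L h" using assms(1) unfolding Pt_def by simp
  then have "hom ar A L (\<lambda>a\<in>carrier A. h (\<mu> a))"
    by (rule hom_restrict[OF hom_comp[OF assms(2)] assms(3)])
  then show ?thesis unfolding Pt_def by simp
qed

lemma coproduct_Pt_eqI:
  fixes L :: "('l, 'o, 'n) alg"
  assumes coprod: "is_coproduct TYPE('l) ar E I A C \<mu>" and L_in: "in_variety ar E L"
    and algA: "\<forall>i\<in>I. algebra ar (A i)"
    and g: "g \<in> Pt ar L C" and h: "h \<in> Pt ar L C"
    and agree: "\<forall>i\<in>I. \<forall>a\<in>carrier (A i). g (\<mu> i a) = h (\<mu> i a)"
  shows "g = h"
proof -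
  define f where "f i = (\<lambda>a\<in>carrier (A i). h (\<mu> i a))" for i
  have "hom ar (A i) L (f i)" if i: "i \<in> I" for i
  proof -
    have "hom ar (A i) C (\<mu> i)" using coprod i unfolding is_coproduct_def by blast
    then have "f i \<in> Pt ar L (A i)" unfolding f_def using Pt_pullback[OF h] algA i by blast
    then show ?thesis unfolding Pt_def by blast
  qed
  moreover have "\<And>\<phi>. \<forall>i\<in>I. hom ar (A i) L (\<phi> i) \<Longrightarrow>
      \<exists>!u. u \<in> extensional (carrier C) \<and> hom ar C L u \<and>
        (\<forall>i\<in>I. \<forall>a\<in>carrier (A i). u (\<mu> i a) = \<phi> i a)"
    using coprod L_in unfolding is_coproduct_def by blast
  ultimately have uniq: "\<exists>!u. u \<in> extensional (carrier C) \<and> hom ar C L u \<and>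
      (\<forall>i\<in>I. \<forall>a\<in>carrier (A i). u (\<mu> i a) = f i a)"
    by blast
  have "g \<in> extensional (carrier C) \<and> hom ar C L g \<and>
      (\<forall>i\<in>I. \<forall>a\<in>carrier (A i). g (\<mu> i a) = f i a)"
    using g agree unfolding Pt_def f_def by simp
  moreover have "h \<in> extensional (carrier C) \<and> hom ar C L h \<and>
      (\<forall>i\<in>I. \<forall>a\<in>carrier (A i). h (\<mu> i a) = f i a)"
    using h unfolding Pt_def f_def by simp
  ultimately show ?thesis using uniq by blast
qed

lemma affine_system_product:
  assumes "algebra ar C" "is_product_map ar L I X \<kappa> A C \<mu> K"
  shows "affine_system ar L (Pi\<^sub>E I X) K C"
  using assms unfolding affine_system_def is_product_map_def by simp

lemma ell_product_pullback:
  assumes prodmap: "is_product_map ar L I X \<kappa> A C \<mu> K"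
    and hom\<mu>: "hom ar (A i) C (\<mu> i)" and x: "x \<in> Pi\<^sub>E I X" and i: "i \<in> I"
  shows "ell (A i) (\<kappa> i) (x i) = (\<lambda>a\<in>carrier (A i). ell C K x (\<mu> i a))"
  unfolding ell_def
proof (rule restrict_ext)
  fix a assume a: "a \<in> carrier (A i)"
  then have "\<mu> i a \<in> carrier C" using hom\<mu> unfolding hom_def by auto
  then show "\<kappa> i a (x i) = (\<lambda>c\<in>carrier C. K c x) (\<mu> i a)"
    using prodmap a x i unfolding is_product_map_def by simp
qed

lemma inj_on_ell_product:
  assumes prodmap: "is_product_map ar L I X \<kappa> A C \<mu> K"
    and hom\<mu>: "\<forall>i\<in>I. hom ar (A i) C (\<mu> i)"
    and inj: "\<forall>i\<in>I. inj_on (ell (A i) (\<kappa> i)) (X i)"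
  shows "inj_on (ell C K) (Pi\<^sub>E I X)"
proof (rule inj_onI)
  fix x y assume x: "x \<in> Pi\<^sub>E I X" and y: "y \<in> Pi\<^sub>E I X" and eq: "ell C K x = ell C K y"
  show "x = y"
  proof (rule PiE_ext[OF x y])
    fix i assume i: "i \<in> I"
    have hom\<mu>i: "hom ar (A i) C (\<mu> i)" using hom\<mu> i by blast
    have "ell (A i) (\<kappa> i) (x i) = ell (A i) (\<kappa> i) (y i)"
      unfolding ell_product_pullback[OF prodmap hom\<mu>i x i] ell_product_pullback[OF prodmap hom\<mu>i y i]
        eq ..
    moreover have "inj_on (ell (A i) (\<kappa> i)) (X i)" using inj i by blast
    ultimately show "x i = y i" using x y i by (auto dest: inj_onD)
  qed
qed

lemma Pt_subset_ell_product_image: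
  fixes L :: "('l, 'o, 'n) alg"
  assumes coprod: "is_coproduct TYPE('l) ar E I A C \<mu>" and L_in: "in_variety ar E L"
    and algA: "\<forall>i\<in>I. algebra ar (A i)"
    and surj: "\<forall>i\<in>I. Pt ar L (A i) \<subseteq> ell (A i) (\<kappa> i) ` X i"
    and prodmap: "is_product_map ar L I X \<kappa> A C \<mu> K"
  shows "Pt ar L C \<subseteq> ell C K ` Pi\<^sub>E I X"
proof
  fix h assume h: "h \<in> Pt ar L C"
  have hom\<mu>: "\<forall>i\<in>I. hom ar (A i) C (\<mu> i)" using coprod unfolding is_coproduct_def by blast
  have "\<forall>i\<in>I. \<exists>xi. xi \<in> X i \<and> ell (A i) (\<kappa> i) xi = (\<lambda>a\<in>carrier (A i). h (\<mu> i a))"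
  proof
    fix i assume i: "i \<in> I"
    have "(\<lambda>a\<in>carrier (A i). h (\<mu> i a)) \<in> Pt ar L (A i)"
      using Pt_pullback[OF h] hom\<mu> algA i by blast
    then have "(\<lambda>a\<in>carrier (A i). h (\<mu> i a)) \<in> ell (A i) (\<kappa> i) ` X i" using surj i by blast
    then show "\<exists>xi. xi \<in> X i \<and> ell (A i) (\<kappa> i) xi = (\<lambda>a\<in>carrier (A i). h (\<mu> i a))"
      by (metis imageE)
  qed
  then obtain y where y: "\<forall>i\<in>I. y i \<in> X i \<and>
      ell (A i) (\<kappa> i) (y i) = (\<lambda>a\<in>carrier (A i). h (\<mu> i a))"
    by (metis bchoice)
  define x where "x = restrict y I"
  have x: "x \<in> Pi\<^sub>E I X" using y unfolding x_def by simp
  have "algebra ar C" using coprod unfolding is_coproduct_def in_variety_def by blast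
  then have point: "ell C K x \<in> Pt ar L C"
    using ell_in_Pt[OF affine_system_product[OF _ prodmap] x] by blast
  have "\<forall>i\<in>I. \<forall>a\<in>carrier (A i). ell C K x (\<mu> i a) = h (\<mu> i a)"
  proof (intro ballI)
    fix i a assume i: "i \<in> I" and a: "a \<in> carrier (A i)"
    have "ell C K x (\<mu> i a) = ell (A i) (\<kappa> i) (x i) a"
      using ell_product_pullback[OF prodmap _ x i] hom\<mu> i a by simp
    then show "ell C K x (\<mu> i a) = h (\<mu> i a)" using y i a unfolding x_def by simp
  qed
  then have "ell C K x = h" by (rule coproduct_Pt_eqI[OF coprod L_in algA point h])
  then show "h \<in> ell C K ` Pi\<^sub>E I X" using x by blast
qed

theorem proposition18:
  fixes ar :: "'o \<Rightarrow> 'n set"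
    and E :: "(('v, 'o, 'n) trm \<times> ('v, 'o, 'n) trm) set"
    and L :: "('l, 'o, 'n) alg"
    and I :: "'i set"
    and X :: "'i \<Rightarrow> 'x set"
    and \<kappa> :: "'i \<Rightarrow> 'a \<Rightarrow> 'x \<Rightarrow> 'l"
    and A :: "'i \<Rightarrow> ('a, 'o, 'n) alg"
    and C :: "('c, 'o, 'n) alg"
    and \<mu> :: "'i \<Rightarrow> 'a \<Rightarrow> 'c"
    and K :: "'c \<Rightarrow> ('i \<Rightarrow> 'x) \<Rightarrow> 'l"
  assumes L_in: "in_variety ar E L"
    and A_in: "\<forall>i\<in>I. in_variety ar E (A i)"
    and coprod: "is_coproduct TYPE('l) ar E I A C \<mu>"
    and systems: "\<forall>i\<in>I. affine_system ar L (X i) (\<kappa> i) (A i)"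
    and sober_i: "\<forall>i\<in>I. sober ar L (X i) (\<kappa> i) (A i)"
    and prodmap: "is_product_map ar L I X \<kappa> A C \<mu> K"
  shows "affine_system ar L (Pi\<^sub>E I X) K C \<and> sober ar L (Pi\<^sub>E I X) K C"
proof -
  have algA: "\<forall>i\<in>I. algebra ar (A i)" using A_in unfolding in_variety_def by blast
  have hom\<mu>: "\<forall>i\<in>I. hom ar (A i) C (\<mu> i)" using coprod unfolding is_coproduct_def by blast
  have "algebra ar C" using coprod unfolding is_coproduct_def in_variety_def by blast
  then have system: "affine_system ar L (Pi\<^sub>E I X) K C"
    by (rule affine_system_product[OF _ prodmap])
  have "inj_on (ell C K) (Pi\<^sub>E I X)"
    using inj_on_ell_product[OF prodmap hom\<mu>] sober_i unfolding sober_def bij_betw_def by blast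
  moreover have "Pt ar L C \<subseteq> ell C K ` Pi\<^sub>E I X"
    using Pt_subset_ell_product_image[OF coprod L_in algA _ prodmap] sober_i
    unfolding sober_def bij_betw_def by blast
  moreover have "ell C K ` Pi\<^sub>E I X \<subseteq> Pt ar L C" using ell_in_Pt[OF system] by blast
  ultimately show ?thesis using system unfolding sober_def bij_betw_def by blast
qed

end
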